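(* Let $m \equiv 3 \pmod 4$ with $m > 3$, $n = 3^m - 1$, $v = (3^{(m+1)/2}+1)/2$ and $\delta = (3^{(m-1)/2}+7)/2$. Then $\gcd(v,n) = 1$, and, setting $T_{(0,3,m)}(v) = \{ vi \bmod n : i \in T_{(0,3,m)}\}$, we have $\{1, 2, \ldots, \delta-1\} \subseteq T_{(0,3,m)}(v)$.
   Context: For an integer $0 \le j \le n-1$ with $3$-adic expansion $j = \sum_{t=0}^{m-1} j_t 3^t$, $j_t \in \{0,1,2\}$, let $w_3(j) = \sum_{t=0}^{m-1} j_t$. For distinct $i_1,i_2 \in \{0,1,2,3\}$, $T_{(i_1,i_2,m)} = \{1 \le j \le n-1 : w_3(j) \equiv i_1 \text{ or } i_2 \pmod 4\}$. For an integer $b$, $b \bmod n$ is the unique $b_0 \in \{0,\ldots,n-1\}$ with $b \equiv b_0 \pmod n$. *)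

theory Defs
  imports Main
begin

fun w3 :: "nat \<Rightarrow> nat" where
  "w3 j = (if j = 0 then 0 else j mod 3 + w3 (j div 3))"

declare w3.simps[simp del]

definition T_set :: "nat \<Rightarrow> nat \<Rightarrow> nat \<Rightarrow> nat set" where
  "T_set i1 i2 m = {j. 1 \<le> j \<and> j \<le> 3^m - 2 \<and>
      (w3 j mod 4 = i1 mod 4 \<or> w3 j mod 4 = i2 mod 4)}"

end

theory Submission
  imports Defs
begin

text \<open>Write \<open>m = 2p + 1\<close> with \<open>p\<close> odd and \<open>3^p = 2r + 1\<close>. Then \<open>v = 3r + 2\<close>,
  \<open>\<delta> = r + 4\<close> and \<open>n = 12r\<^sup>2 + 12r + 2\<close>. Each \<open>a \<le> r + 3\<close> is \<open>v i mod n\<close> for an explicit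
  \<open>i\<close> whose base-3 digits are a block \<open>x\<close> followed by (essentially) the complement of \<open>x\<close>,
  so that \<open>w\<^sub>3(i)\<close> is \<open>2p + 2 \<equiv> 0\<close> or \<open>2p + 1 \<equiv> 3 (mod 4)\<close>:
  \<open>i = a(6r + 2)\<close> for even \<open>a\<close>, \<open>i = (r + a) 3^(p+1) + (3r + 1 - a)\<close> for odd \<open>a \<le> r\<close>,
  and \<open>i = 3^(p+1) + 3^p - 1\<close> for \<open>a = r + 2\<close>. Taking \<open>a = 1\<close> gives \<open>gcd v n = 1\<close>.\<close>

lemma w3_eq: "w3 x = x mod 3 + w3 (x div 3)"
  by (cases "x = 0") (simp_all add: w3.simps[of x] w3.simps[of 0])

lemma w3_0 [simp]: "w3 0 = 0"
  by (simp add: w3.simps)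

lemma w3_1 [simp]: "w3 1 = 1"
  using w3_eq[of 1] by simp

lemma w3_mult_3_add: "d < 3 \<Longrightarrow> w3 (a * 3 + d) = d + w3 a"
  using w3_eq[of "a * 3 + d"] by simp

lemma w3_add_mult_power:
  "b < 3^s \<Longrightarrow> w3 (a * 3^s + b) = w3 a + w3 b"
proof (induction s arbitrary: b)
  case 0
  then show ?case by simp
next
  case (Suc s)
  have split: "a * 3^Suc s + b = (a * 3^s + b div 3) * 3 + b mod 3" by simp
  have "w3 (a * 3^Suc s + b) = b mod 3 + w3 (a * 3^s + b div 3)"
    unfolding split by (rule w3_mult_3_add) simp
  also have "\<dots> = w3 a + (b mod 3 + w3 (b div 3))"
    using Suc by (simp add: less_mult_imp_div_less)
  also have "\<dots> = w3 a + w3 b" using w3_eq[of b] by simp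
  finally show ?case .
qed

lemma w3_complement:
  "x < 3^s \<Longrightarrow> w3 (3^s - 1 - x) + w3 x = 2 * s"
proof (induction s arbitrary: x)
  case 0
  then show ?case by simp
next
  case (Suc s)
  define q r where "q = x div 3" and "r = x mod 3"
  have q: "q < 3^s" using Suc.prems unfolding q_def by auto
  have r: "r < 3" unfolding r_def by simp
  have x: "x = q * 3 + r" unfolding q_def r_def by simp
  obtain t where "3^s = q + 1 + t"
    using q by (metis less_imp_Suc_add add.commute Suc_eq_plus1 add.assoc)
  then have "3^Suc s - 1 - x = (3^s - 1 - q) * 3 + (2 - r)"
    using r by (simp add: x)
  moreover have "w3 (3^s - 1 - q) + w3 q = 2 * s" using q by (rule Suc.IH)
  ultimately show ?case
    using w3_mult_3_add[of "2 - r"] w3_mult_3_add[OF r, of q] r by (simp add: x)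
qed

lemma w3_mult_power_minus_one:
  assumes "1 \<le> a" "a \<le> 3^s"
  shows "w3 (a * (3^s - 1)) = 2 * s"
proof -
  have low: "3^s - 1 - (a - 1) < 3^s" using assms by simp
  have "a * (3^s - 1) = (a - 1) * 3^s + (3^s - 1 - (a - 1))"
    using assms by (cases a) (simp_all add: algebra_simps)
  then have "w3 (a * (3^s - 1)) = w3 (a - 1) + w3 (3^s - 1 - (a - 1))"
    using w3_add_mult_power[OF low] by simp
  also have "\<dots> = 2 * s" using w3_complement[of "a - 1" s] assms by (simp add: add.commute)
  finally show ?thesis .
qed

lemma w3_high_low_complement:
  assumes "x < 3^s"
  shows "w3 (x * 3^(s+1) + (2 * 3^s - 1 - x)) = 2 * s + 1"
proof -
  have low: "2 * 3^s - 1 - x < 3^(s+1)" by (simp add: less_imp_diff_less)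
  have "3^(s+1) - 1 - (2 * 3^s - 1 - x) = 1 * 3^s + x" using assms by simp
  then have "w3 (3^(s+1) - 1 - (2 * 3^s - 1 - x)) = 1 + w3 x"
    using w3_add_mult_power[OF assms, of 1] w3_1 by simp
  then have "1 + w3 x + w3 (2 * 3^s - 1 - x) = 2 * (s + 1)"
    using w3_complement[OF low] by simp
  then show ?thesis using w3_add_mult_power[OF low] by simp
qed

lemma T_set_0_3I:
  assumes "1 \<le> i" "i \<le> 3^m - 2" "w3 i mod 4 = 0 \<or> w3 i mod 4 = 3"
  shows "i \<in> T_set 0 3 m"
  using assms unfolding T_set_def by auto

lemma odd_pow_three_mod_four:
  assumes "odd p"
  shows "(3::nat)^p mod 4 = 3"
proof -
  obtain k where "p = 2 * k + 1" using assms oddE by blast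
  moreover have "(9::nat)^k mod 4 = 1" using power_mod[of "9::nat" 4 k] by simp
  ultimately show ?thesis by (simp add: power_add power_mult mod_mult_right_eq[of 3, symmetric])
qed

context
  fixes p r :: nat
  assumes three_pow_p: "3^p = 2 * r + 1"
begin

lemma three_pow_Suc_p: "3^(p+1) = 6 * r + 3"
  using three_pow_p by simp

lemma three_pow_modulus: "(3::nat)^(2*p+1) - 1 = 12 * r * r + 12 * r + 2"
proof -
  have "(3::nat)^(2*p+1) = 3 * (3^p * 3^p)" by (simp add: power_mult_distrib flip: power_add mult_2)
  then show ?thesis unfolding three_pow_p by (simp add: algebra_simps)
qed

lemma mod_three_pow_modulus_eqI:
  assumes "x = q * (3^(2*p+1) - 1) + a" "a \<le> 3 * r + 1"
  shows "x mod (3^(2*p+1) - 1) = a"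
proof -
  have "a < 3^(2*p+1) - 1" using assms(2) three_pow_modulus by simp
  then show ?thesis using assms(1) by simp
qed

lemma even_witness:
  assumes p: "odd p" and a: "even a" "1 \<le> a" "a \<le> 2 * r"
  defines "i \<equiv> a * (6 * r + 2)"
  shows "i \<in> T_set 0 3 (2*p+1)" "(3 * r + 2) * i mod (3^(2*p+1) - 1) = a"
proof -
  have "i = a * (3^(p+1) - 1)" unfolding i_def three_pow_Suc_p by simp
  then have "w3 i = 2 * (p + 1)"
    using w3_mult_power_minus_one[of a "p+1"] a three_pow_Suc_p by simp
  moreover have "i \<le> 2 * r * (6 * r + 2)" unfolding i_def using a(3) by (rule mult_right_mono) simp
  ultimately show "i \<in> T_set 0 3 (2*p+1)"
    using three_pow_modulus p a unfolding i_def
    by (intro T_set_0_3I) (auto simp: algebra_simps, presburger)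
  obtain b where "a = 2 * b" using a(1) by blast
  then have "(3 * r + 2) * i = 3 * b * (3^(2*p+1) - 1) + a"
    unfolding i_def three_pow_modulus by (simp add: algebra_simps)
  then show "(3 * r + 2) * i mod (3^(2*p+1) - 1) = a"
    using a by (intro mod_three_pow_modulus_eqI) auto
qed

lemma odd_r_of_odd_p: "odd p \<Longrightarrow> odd r"
  using odd_pow_three_mod_four[of p] three_pow_p by presburger

lemma odd_witness:
  assumes p: "odd p" and a: "odd a" "a \<le> r"
  defines "i \<equiv> (r + a) * (6 * r + 3) + (3 * r + 1 - a)"
  shows "i \<in> T_set 0 3 (2*p+1)" "(3 * r + 2) * i mod (3^(2*p+1) - 1) = a"
proof -
  have "i = (r + a) * 3^(p+1) + (2 * 3^p - 1 - (r + a))"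
    unfolding i_def three_pow_Suc_p three_pow_p by simp
  moreover have "r + a < 3^p" using a three_pow_p by simp
  ultimately have "w3 i = 2 * p + 1" using w3_high_low_complement by simp
  moreover have "(r + a) * (6 * r + 3) \<le> 2 * r * (6 * r + 3)"
    using a by (intro mult_right_mono) auto
  ultimately show "i \<in> T_set 0 3 (2*p+1)"
    using three_pow_modulus p a unfolding i_def
    by (intro T_set_0_3I) (auto simp: algebra_simps, presburger)
  obtain c where c: "a = 2 * c + 1" using a(1) oddE by blast
  obtain d where d: "r = 2 * d + 1" using odd_r_of_odd_p[OF p] oddE by blast
  obtain g where g: "d = c + g" using a(2) c d le_Suc_ex by fastforce
  have "(3 * r + 2) * i = (3 * d + 3 * c + 4) * (3^(2*p+1) - 1) + a"
    unfolding i_def three_pow_modulus c d g by (simp add: algebra_simps)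
  then show "(3 * r + 2) * i mod (3^(2*p+1) - 1) = a"
    using a by (intro mod_three_pow_modulus_eqI) auto
qed

lemma middle_witness:
  assumes p: "odd p"
  defines "i \<equiv> 8 * r + 3"
  shows "i \<in> T_set 0 3 (2*p+1)" "(3 * r + 2) * i mod (3^(2*p+1) - 1) = r + 2"
proof -
  have r: "1 \<le> r" using odd_r_of_odd_p[OF p] by presburger
  have low: "3^p - 1 < (3::nat)^(p+1)" by (simp add: less_imp_diff_less)
  have "w3 (3^p - 1) = 2 * p" using w3_complement[of 0 p] by simp
  then have "w3 (1 * 3^(p+1) + (3^p - 1)) = 2 * p + 1"
    using w3_add_mult_power[OF low, of 1] w3_1 by simp
  moreover have "i = 1 * 3^(p+1) + (3^p - 1)"
    unfolding i_def three_pow_Suc_p three_pow_p by simp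
  ultimately have "w3 i = 2 * p + 1" by simp
  then show "i \<in> T_set 0 3 (2*p+1)"
    using three_pow_modulus p r unfolding i_def
    by (intro T_set_0_3I) (auto simp: algebra_simps, presburger)
  have "(3 * r + 2) * i = 2 * (3^(2*p+1) - 1) + (r + 2)"
    unfolding i_def three_pow_modulus by (simp add: algebra_simps)
  then show "(3 * r + 2) * i mod (3^(2*p+1) - 1) = r + 2"
    using r by (intro mod_three_pow_modulus_eqI) auto
qed

lemma residues_cover_initial_segment:
  assumes "odd p" "3 \<le> r" "1 \<le> a" "a \<le> r + 3"
  shows "\<exists>i \<in> T_set 0 3 (2*p+1). (3 * r + 2) * i mod (3^(2*p+1) - 1) = a"
proof (cases "even a")
  case True
  moreover have "a \<le> 2 * r" using assms by simp
  ultimately show ?thesis using even_witness[of a] assms by blast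
next
  case False
  show ?thesis
  proof (cases "a \<le> r")
    case True
    then show ?thesis using odd_witness[of a] False assms by blast
  next
    case False
    then have "a = r + 2" using \<open>odd a\<close> odd_r_of_odd_p assms by presburger
    then show ?thesis using middle_witness assms by blast
  qed
qed

end

theorem lemma2:
  fixes m :: nat
  assumes "m mod 4 = 3" and "m > 3"
  defines "n \<equiv> 3^m - 1"
      and "v \<equiv> (3^((m+1) div 2) + 1) div 2"
      and "\<delta> \<equiv> (3^((m-1) div 2) + 7) div 2"
  shows "gcd v n = 1 \<and> {1..<\<delta>} \<subseteq> (\<lambda>i. (v * i) mod n) ` T_set 0 3 m"
proof -
  define k where "k = m div 4"
  have k: "m = 4 * k + 3" "1 \<le> k" using assms(1,2) unfolding k_def by presburger+
  define p where "p = 2 * k + 1"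
  define r where "r = ((3::nat)^p - 1) div 2"
  have p: "odd p" "3 \<le> p" and m: "m = 2 * p + 1" using k unfolding p_def by auto
  have three_pow_p: "3^p = 2 * r + 1"
  proof -
    have "odd ((3::nat)^p)" by simp
    then show ?thesis unfolding r_def by presburger
  qed
  have "(27::nat) \<le> 3^p" using power_increasing[OF p(2), of "3::nat"] by simp
  then have "3 \<le> r" using three_pow_p by simp
  have v: "v = 3 * r + 2" and \<delta>: "\<delta> = r + 4"
    unfolding v_def \<delta>_def m using three_pow_p by simp_all
  have cover: "{1..<\<delta>} \<subseteq> (\<lambda>i. (v * i) mod n) ` T_set 0 3 m"
    using residues_cover_initial_segment[OF three_pow_p p(1) \<open>3 \<le> r\<close>]
    unfolding n_def v \<delta> m by fastforce
  then obtain i where "(v * i) mod n = 1" using \<delta> by force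
  then have "gcd v n = 1" by (metis gcd_dvd1 gcd_dvd2 dvd_mod_iff dvd_mult2 nat_dvd_1_iff_1)
  with cover show ?thesis by blast
qed

end
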